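(* A countable abelian group $\Gamma$ is algebraically $C^*$-unique if and only if it is locally finite, i.e. if and only if every element of $\Gamma$ has finite order.
   Context: A countable discrete group $\Gamma$ is called algebraically $C^*$-unique if its complex group algebra $\mathbb{C}\Gamma$ admits exactly one $C^*$-norm (a norm satisfying $\|a^*a\|=\|a\|^2$). A group is locally finite if every finitely generated subgroup is finite. *)

theory Defs
  imports "HOL-Analysis.Analysis" "HOL-Library.Poly_Mapping"
begin

text \<open>The complex group algebra of an abelian group 'g (written additively) is the type
  of finitely supported functions from 'g to complex; the library's multiplication on this
  type is convolution (lookup (a*b) x = sum over y+z=x of a y * b z), i.e. the group algebra product.\<close>

lift_definition gstar :: "('g::ab_group_add \<Rightarrow>\<^sub>0 complex) \<Rightarrow> ('g \<Rightarrow>\<^sub>0 complex)"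
  is "\<lambda>f x. cnj (f (- x))"
proof -
  fix f :: "'g \<Rightarrow> complex"
  assume "finite {x. f x \<noteq> 0}"
  then have "finite (uminus ` {x. f x \<noteq> 0})" by simp
  moreover have "{x. cnj (f (- x)) \<noteq> 0} = uminus ` {x. f x \<noteq> 0}"
    by (force simp: image_iff)
  ultimately show "finite {x. cnj (f (- x)) \<noteq> 0}" by simp
qed

lift_definition gscale :: "complex \<Rightarrow> ('g \<Rightarrow>\<^sub>0 complex) \<Rightarrow> ('g \<Rightarrow>\<^sub>0 complex)"
  is "\<lambda>c f x. c * f x"
  by (simp add: finite_subset)

definition cstar_norm :: "(('g::ab_group_add \<Rightarrow>\<^sub>0 complex) \<Rightarrow> real) \<Rightarrow> bool" where
  "cstar_norm N \<longleftrightarrow>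
     (\<forall>a. 0 \<le> N a) \<and> (\<forall>a. N a = 0 \<longleftrightarrow> a = 0) \<and>
     (\<forall>a b. N (a + b) \<le> N a + N b) \<and>
     (\<forall>c a. N (gscale c a) = cmod c * N a) \<and>
     (\<forall>a b. N (a * b) \<le> N a * N b) \<and>
     (\<forall>a. N (gstar a * a) = (N a)\<^sup>2)"

definition alg_cstar_unique :: "'g::ab_group_add itself \<Rightarrow> bool" where
  "alg_cstar_unique _ \<longleftrightarrow> (\<exists>!N :: ('g \<Rightarrow>\<^sub>0 complex) \<Rightarrow> real. cstar_norm N)"

definition gen_subgroup :: "'g::ab_group_add set \<Rightarrow> 'g set" where
  "gen_subgroup S = \<Inter>{H. S \<subseteq> H \<and> 0 \<in> H \<and> (\<forall>a\<in>H. \<forall>b\<in>H. a - b \<in> H)}"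

definition locally_finite :: "'g::ab_group_add itself \<Rightarrow> bool" where
  "locally_finite _ \<longleftrightarrow> (\<forall>S :: 'g set. finite S \<longrightarrow> finite (gen_subgroup S))"

definition nsmul :: "nat \<Rightarrow> 'g::ab_group_add \<Rightarrow> 'g" where
  "nsmul n x = ((+) x ^^ n) 0"

definition torsion_group :: "'g::ab_group_add itself \<Rightarrow> bool" where
  "torsion_group _ \<longleftrightarrow> (\<forall>x :: 'g. \<exists>n>0. nsmul n x = 0)"

end

theory Submission
  imports Defs
begin

text \<open>Characters of an abelian group separate the points of its group algebra, so every
  family of characters that does so defines a C*-norm: the supremum of the moduli of the
  Fourier transforms over the family. On a torsion group every element has finite spectrum;
  Lagrange interpolation on the spectrum shows that every C*-norm dominates the supremum
  over all characters, and the C*-identity applied to the powers of a* a gives the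
  reverse bound, so the C*-norm is unique. If x has infinite order, the characters with
  Re (ch x) \<ge> 0 already separate the group algebra, and their supremum norm differs from
  the full one at 1 - x.\<close>

abbreviation "keys \<equiv> Poly_Mapping.keys"
abbreviation "lookup \<equiv> Poly_Mapping.lookup"
abbreviation "single \<equiv> Poly_Mapping.single"

lemma nsmul_0 [simp]: "nsmul 0 x = 0"
  by (simp add: nsmul_def)

lemma nsmul_Suc: "nsmul (Suc n) x = x + nsmul n x"
  by (simp add: nsmul_def)

lemma nsmul_1 [simp]: "nsmul 1 x = x" "nsmul (Suc 0) x = x"
  by (simp_all add: nsmul_def)

lemma nsmul_add: "nsmul (m + n) x = nsmul m x + nsmul n x"
  by (induct m) (simp_all add: nsmul_Suc add.assoc)

lemma nsmul_mult: "nsmul (m * n) x = nsmul m (nsmul n x)"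
  by (induct m) (simp_all add: nsmul_Suc nsmul_add)

lemma nsmul_zero [simp]: "nsmul n (0::'g::ab_group_add) = 0"
  by (induct n) (simp_all add: nsmul_Suc)

lemma nsmul_mod_order:
  fixes x :: "'g::ab_group_add"
  assumes "nsmul k x = 0"
  shows "nsmul n x = nsmul (n mod k) x"
  by (metis div_mult_mod_eq nsmul_add nsmul_mult nsmul_zero assms add_0 mult.commute)

lemma uminus_nsmul_order:
  fixes x :: "'g::ab_group_add"
  assumes "0 < k" "nsmul k x = 0"
  shows "- nsmul n x = nsmul (n * (k - 1)) x"
proof -
  have "nsmul (n * (k - 1)) x + nsmul n x = nsmul (n * k) x"
    using assms(1) by (simp flip: nsmul_add) (simp add: algebra_simps)
  then show ?thesis by (simp add: nsmul_mult assms(2) add_eq_0_iff)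
qed

lemma nsmul_mem_subgroup:
  fixes x :: "'g::ab_group_add"
  assumes "0 \<in> H" "\<forall>a\<in>H. \<forall>b\<in>H. a - b \<in> H" "x \<in> H"
  shows "nsmul n x \<in> H"
proof (induct n)
  case (Suc n)
  then have "x - (0 - nsmul n x) \<in> H" using assms by blast
  then show ?case by (simp add: nsmul_Suc)
qed (simp add: assms)

lemma least_nsmul_mem_dvd:
  fixes y :: "'g::ab_group_add"
  assumes H: "0 \<in> H" "\<forall>a\<in>H. \<forall>b\<in>H. a - b \<in> H"
    and k: "0 < k" "nsmul k y \<in> H" and least: "\<And>i. i < k \<Longrightarrow> \<not> (0 < i \<and> nsmul i y \<in> H)"
    and j: "nsmul j y \<in> H"
  shows "k dvd j"
proof -
  have "nsmul j y = nsmul (j div k) (nsmul k y) + nsmul (j mod k) y"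
    by (metis div_mult_mod_eq nsmul_add nsmul_mult)
  then have "nsmul (j mod k) y = nsmul j y - nsmul (j div k) (nsmul k y)"
    by (simp add: algebra_simps)
  moreover have "nsmul (j div k) (nsmul k y) \<in> H"
    using nsmul_mem_subgroup[OF H k(2)] .
  ultimately have "nsmul (j mod k) y \<in> H" using H(2) j by simp
  then have "j mod k = 0" using least[of "j mod k"] k(1) by fastforce
  then show ?thesis by (simp add: dvd_eq_mod_eq_0)
qed

section \<open>Characters and the Fourier transform\<close>

lemma unit_cnj_mult: "cmod z = 1 \<Longrightarrow> cnj z * z = 1"
  using complex_norm_square[of z] by (simp add: mult.commute)

definition character :: "('g::ab_group_add \<Rightarrow> complex) \<Rightarrow> bool" where
  "character ch \<longleftrightarrow> (\<forall>x y. ch (x + y) = ch x * ch y) \<and> (\<forall>x. cmod (ch x) = 1)"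

lemma character_add: "character ch \<Longrightarrow> ch (x + y) = ch x * ch y"
  by (simp add: character_def)

lemma character_norm: "character ch \<Longrightarrow> cmod (ch x) = 1"
  by (simp add: character_def)

lemma character_nonzero: "character ch \<Longrightarrow> ch x \<noteq> 0"
  using character_norm[of ch x] by auto

lemma character_0: "character ch \<Longrightarrow> ch 0 = 1"
  using character_add[of ch 0 0] character_nonzero[of ch 0] by simp

lemma character_uminus:
  assumes ch: "character ch"
  shows "ch (- x) = cnj (ch x)"
proof -
  have "ch (- x) * ch x = cnj (ch x) * ch x"
    using character_add[OF ch, of "- x" x] character_0[OF ch]
      unit_cnj_mult[OF character_norm[OF ch]]
    by simp
  then show ?thesis using character_nonzero[OF ch, of x] by simp
qed

lemma character_diff: "character ch \<Longrightarrow> ch (x - y) = ch x * cnj (ch y)"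
  by (metis character_add character_uminus diff_conv_add_uminus)

lemma character_eq_iff:
  assumes "character ch"
  shows "ch x = ch y \<longleftrightarrow> ch (x - y) = 1"
  using character_diff[OF assms, of x y] unit_cnj_mult[OF character_norm[OF assms, of y]]
    character_nonzero[OF assms, of y]
  by (metis mult.assoc mult.comm_neutral mult.commute)

lemma character_nsmul: "character ch \<Longrightarrow> ch (nsmul n x) = ch x ^ n"
  by (induct n) (simp_all add: nsmul_Suc character_add character_0)

lemma character_one: "character (\<lambda>_. 1)"
  by (simp add: character_def)

lemma character_mult_power:
  "character ch \<Longrightarrow> character ps \<Longrightarrow> character (\<lambda>x. ch x * ps x ^ m)"
  by (simp add: character_def power_mult_distrib norm_mult norm_power)

definition fourier :: "('g \<Rightarrow> complex) \<Rightarrow> ('g \<Rightarrow>\<^sub>0 complex) \<Rightarrow> complex" where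
  "fourier ch a = (\<Sum>g\<in>keys a. lookup a g * ch g)"

lemma fourier_superset:
  "finite A \<Longrightarrow> keys a \<subseteq> A \<Longrightarrow> fourier ch a = (\<Sum>g\<in>A. lookup a g * ch g)"
  unfolding fourier_def by (rule sum.mono_neutral_left) (auto simp: in_keys_iff)

lemma fourier_0 [simp]: "fourier ch 0 = 0"
  by (simp add: fourier_def)

lemma fourier_single [simp]: "fourier ch (single g c) = c * ch g"
  by (simp add: fourier_def)

lemma fourier_add: "fourier ch (a + b) = fourier ch a + fourier ch b"
proof -
  have "fourier ch (a + b) = (\<Sum>g\<in>keys a \<union> keys b. lookup (a + b) g * ch g)"
    by (rule fourier_superset) (auto simp: keys_add)
  then show ?thesis
    by (simp add: lookup_add distrib_right sum.distrib fourier_superset[of "keys a \<union> keys b"])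
qed

lemma fourier_uminus: "fourier ch (- a) = - fourier ch a"
  by (metis add_eq_0_iff fourier_add fourier_0 neg_eq_iff_add_eq_0)

lemma fourier_diff: "fourier ch (a - b) = fourier ch a - fourier ch b"
  by (metis fourier_add fourier_uminus diff_conv_add_uminus)

lemma fourier_sum: "fourier ch (sum f A) = (\<Sum>x\<in>A. fourier ch (f x))"
  by (induct A rule: infinite_finite_induct) (simp_all add: fourier_add)

lemma fourier_gscale: "fourier ch (gscale c a) = c * fourier ch a"
proof -
  have "fourier ch (gscale c a) = (\<Sum>g\<in>keys a. lookup (gscale c a) g * ch g)"
    by (rule fourier_superset) (auto simp: in_keys_iff gscale.rep_eq)
  then show ?thesis by (simp add: gscale.rep_eq fourier_def sum_distrib_left mult.assoc)
qed

lemma poly_mapping_sum_single: "a = (\<Sum>g\<in>keys a. single g (lookup a g))"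
  by (rule poly_mapping_eqI)
    (simp add: lookup_sum lookup_single when_def in_keys_iff sum.delta'[unfolded in_keys_iff])

lemma fourier_mult:
  assumes ch: "character ch"
  shows "fourier ch (a * b) = fourier ch a * fourier ch b"
proof -
  have "a * b = (\<Sum>g\<in>keys a. \<Sum>h\<in>keys b. single (g + h) (lookup a g * lookup b h))"
    by (subst (1 2) poly_mapping_sum_single) (simp add: sum_product mult_single)
  then have "fourier ch (a * b) = (\<Sum>g\<in>keys a. \<Sum>h\<in>keys b. (lookup a g * ch g) * (lookup b h * ch h))"
    by (simp add: fourier_sum character_add[OF ch] algebra_simps)
  then show ?thesis by (simp add: fourier_def sum_product)
qed

lemma fourier_1: "character ch \<Longrightarrow> fourier ch 1 = 1"
  by (metis fourier_single character_0 mult_1 single_one)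

lemma fourier_power: "character ch \<Longrightarrow> fourier ch (a ^ n) = fourier ch a ^ n"
  by (induct n) (simp_all add: fourier_mult fourier_1)

lemma fourier_prod: "character ch \<Longrightarrow> fourier ch (prod f A) = (\<Prod>x\<in>A. fourier ch (f x))"
  by (induct A rule: infinite_finite_induct) (simp_all add: fourier_mult fourier_1)

lemma fourier_gstar:
  assumes ch: "character ch"
  shows "fourier ch (gstar a) = cnj (fourier ch a)"
proof -
  have "fourier ch (gstar a) = (\<Sum>g\<in>uminus ` keys a. lookup (gstar a) g * ch g)"
    by (rule fourier_superset)
      (auto simp: in_keys_iff gstar.rep_eq image_iff intro!: bexI[of _ "- _"])
  also have "\<dots> = (\<Sum>h\<in>keys a. cnj (lookup a h) * ch (- h))"
    by (subst sum.reindex) (auto simp: gstar.rep_eq)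
  finally show ?thesis by (simp add: fourier_def character_uminus[OF ch])
qed

lemma norm_fourier_le: "character ch \<Longrightarrow> cmod (fourier ch a) \<le> (\<Sum>g\<in>keys a. cmod (lookup a g))"
  unfolding fourier_def by (rule order.trans[OF norm_sum]) (simp add: norm_mult character_norm)

section \<open>Existence of characters\<close>

text \<open>A partial character is encoded by its graph, a character of the subgroup Domain R;
  this makes the union of a chain of partial characters immediate.\<close>

definition partial_char :: "('g::ab_group_add \<times> complex) set \<Rightarrow> bool" where
  "partial_char R \<longleftrightarrow> (0, 1) \<in> R
     \<and> (\<forall>a u b v. (a, u) \<in> R \<longrightarrow> (b, v) \<in> R \<longrightarrow> (a - b, u * cnj v) \<in> R)
     \<and> (\<forall>a u v. (a, u) \<in> R \<longrightarrow> (a, v) \<in> R \<longrightarrow> u = v)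
     \<and> (\<forall>a u. (a, u) \<in> R \<longrightarrow> cmod u = 1)"

lemma partial_char_0: "partial_char R \<Longrightarrow> (0, 1) \<in> R"
  by (simp add: partial_char_def)

lemma partial_char_diff:
  "partial_char R \<Longrightarrow> (a, u) \<in> R \<Longrightarrow> (b, v) \<in> R \<Longrightarrow> (a - b, u * cnj v) \<in> R"
  by (simp add: partial_char_def)

lemma partial_char_unique: "partial_char R \<Longrightarrow> (a, u) \<in> R \<Longrightarrow> (a, v) \<in> R \<Longrightarrow> u = v"
  by (simp add: partial_char_def)

lemma partial_char_norm: "partial_char R \<Longrightarrow> (a, u) \<in> R \<Longrightarrow> cmod u = 1"
  by (simp add: partial_char_def)

lemma partial_char_add:
  assumes R: "partial_char R" and "(a, u) \<in> R" "(b, v) \<in> R"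
  shows "(a + b, u * v) \<in> R"
proof -
  have "(- b, cnj v) \<in> R" using partial_char_diff[OF R partial_char_0[OF R] assms(3)] by simp
  then show ?thesis using partial_char_diff[OF R assms(2)] by fastforce
qed

lemma partial_char_nsmul: "partial_char R \<Longrightarrow> (a, u) \<in> R \<Longrightarrow> (nsmul n a, u ^ n) \<in> R"
  by (induct n) (simp_all add: nsmul_Suc partial_char_0 partial_char_add)

lemma partial_char_Domain:
  assumes "partial_char R"
  shows "0 \<in> Domain R" "\<forall>a\<in>Domain R. \<forall>b\<in>Domain R. a - b \<in> Domain R"
  using partial_char_0[OF assms] partial_char_diff[OF assms] by blast+

text \<open>Extension of R to the subgroup generated by Domain R and y, sending y to u; the
  integer multiples of y are written as differences of natural ones.\<close>

definition char_extension ::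
    "('g::ab_group_add \<times> complex) set \<Rightarrow> 'g \<Rightarrow> complex \<Rightarrow> ('g \<times> complex) set"
  where "char_extension R y u =
    {(h + nsmul n y - nsmul m y, v * u ^ n * cnj u ^ m) | h v n m. (h, v) \<in> R}"

lemma subset_char_extension: "R \<subseteq> char_extension R y u"
proof (clarify)
  fix h v assume "(h, v) \<in> R"
  moreover have "(h, v) = (h + nsmul 0 y - nsmul 0 y, v * u ^ 0 * cnj u ^ 0)" by simp
  ultimately show "(h, v) \<in> char_extension R y u" unfolding char_extension_def by blast
qed

lemma mem_char_extension: "partial_char R \<Longrightarrow> (y, u) \<in> char_extension R y u"
  unfolding char_extension_def
  by (rule CollectI, rule exI[of _ 0], rule exI[of _ 1], rule exI[of _ 1], rule exI[of _ 0])
    (simp add: partial_char_0)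

lemma unit_power_cnj_power_shift:
  assumes "cmod (u::complex) = 1" "j + m + n' = n + m'"
  shows "u ^ n * cnj u ^ m = u ^ j * u ^ n' * cnj u ^ m'"
proof -
  have uc: "u * cnj u = 1" using unit_cnj_mult[OF assms(1)] by (simp add: mult.commute)
  have e: "u ^ n * u ^ m' = u ^ j * u ^ m * u ^ n'"
    by (metis assms(2) power_add add.commute add.left_commute)
  have "u ^ n * cnj u ^ m = u ^ n * cnj u ^ m * (u * cnj u) ^ m'" by (simp add: uc)
  also have "\<dots> = (u ^ n * u ^ m') * cnj u ^ m * cnj u ^ m'"
    by (simp add: power_mult_distrib mult_ac)
  also have "\<dots> = u ^ j * u ^ n' * cnj u ^ m' * (u * cnj u) ^ m"
    unfolding e by (simp add: power_mult_distrib mult_ac)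
  finally show ?thesis by (simp add: uc)
qed

context
  fixes R :: "('g::ab_group_add \<times> complex) set" and y :: 'g and u :: complex
  assumes R: "partial_char R" and u: "cmod u = 1"
    and consistent: "\<And>j. nsmul j y \<in> Domain R \<Longrightarrow> (nsmul j y, u ^ j) \<in> R"
begin

private lemma char_extension_unique_ordered:
  assumes hv: "(h, v) \<in> R" "(h', v') \<in> R"
    and eq: "h + nsmul n y - nsmul m y = h' + nsmul n' y - nsmul m' y"
    and le: "m + n' \<le> n + m'"
  shows "v * u ^ n * cnj u ^ m = v' * u ^ n' * cnj u ^ m'"
proof -
  define j where "j = n + m' - (m + n')"
  have jj: "j + m + n' = n + m'" using le by (simp add: j_def)
  then have "nsmul n y + nsmul m' y - (nsmul m y + nsmul n' y) = nsmul j y"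
    by (metis nsmul_add add_diff_cancel add.assoc)
  moreover have "h' - h = nsmul n y + nsmul m' y - (nsmul m y + nsmul n' y)"
    using eq by (simp add: algebra_simps)
  ultimately have "h' - h = nsmul j y" by simp
  moreover have hdiff: "(h' - h, v' * cnj v) \<in> R" using partial_char_diff[OF R hv(2,1)] .
  ultimately have "(nsmul j y, u ^ j) \<in> R" by (intro consistent) force
  then have "v' * cnj v = u ^ j" using partial_char_unique[OF R] hdiff \<open>h' - h = nsmul j y\<close> by metis
  then have "v' = u ^ j * v" using unit_cnj_mult[OF partial_char_norm[OF R hv(1)]]
    by (metis mult.assoc mult.right_neutral)
  then show ?thesis using unit_power_cnj_power_shift[OF u jj] by (simp add: mult_ac)
qed

lemma partial_char_char_extension: "partial_char (char_extension R y u)"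
  unfolding partial_char_def
proof (intro conjI allI impI)
  show "(0, 1) \<in> char_extension R y u"
    using subset_char_extension partial_char_0[OF R] by blast
next
  fix a w b z assume "(a, w) \<in> char_extension R y u" "(b, z) \<in> char_extension R y u"
  then obtain h1 v1 n1 m1 h2 v2 n2 m2 where
    a: "a = h1 + nsmul n1 y - nsmul m1 y" "w = v1 * u ^ n1 * cnj u ^ m1" "(h1, v1) \<in> R" and
    b: "b = h2 + nsmul n2 y - nsmul m2 y" "z = v2 * u ^ n2 * cnj u ^ m2" "(h2, v2) \<in> R"
    unfolding char_extension_def by blast
  have "a - b = (h1 - h2) + nsmul (n1 + m2) y - nsmul (m1 + n2) y"
    unfolding a b by (simp add: nsmul_add algebra_simps)
  moreover have "w * cnj z = (v1 * cnj v2) * u ^ (n1 + m2) * cnj u ^ (m1 + n2)"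
    unfolding a b by (simp add: power_add mult_ac)
  ultimately show "(a - b, w * cnj z) \<in> char_extension R y u"
    unfolding char_extension_def using partial_char_diff[OF R a(3) b(3)] by blast
next
  fix a w z assume "(a, w) \<in> char_extension R y u" "(a, z) \<in> char_extension R y u"
  then obtain h1 v1 n1 m1 h2 v2 n2 m2 where
    a: "a = h1 + nsmul n1 y - nsmul m1 y" "w = v1 * u ^ n1 * cnj u ^ m1" "(h1, v1) \<in> R" and
    b: "a = h2 + nsmul n2 y - nsmul m2 y" "z = v2 * u ^ n2 * cnj u ^ m2" "(h2, v2) \<in> R"
    unfolding char_extension_def by blast
  show "w = z"
  proof (cases "m1 + n2 \<le> n1 + m2")
    case True
    then show ?thesis using char_extension_unique_ordered[OF a(3) b(3)] a b by simp
  next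
    case False
    then show ?thesis using char_extension_unique_ordered[OF b(3) a(3)] a b by simp
  qed
next
  fix a w assume "(a, w) \<in> char_extension R y u"
  then obtain h v n m where "w = v * u ^ n * cnj u ^ m" "(h, v) \<in> R"
    unfolding char_extension_def by blast
  then show "cmod w = 1" using partial_char_norm[OF R] u by (simp add: norm_mult norm_power)
qed

end

text \<open>The value u is a k-th root of the value of R at k y, for the least such k.\<close>

lemma partial_char_consistent_value:
  fixes R :: "('g::ab_group_add \<times> complex) set"
  assumes R: "partial_char R"
  obtains u where "cmod u = 1" "\<And>j. nsmul j y \<in> Domain R \<Longrightarrow> (nsmul j y, u ^ j) \<in> R"
proof (cases "\<exists>k>0. nsmul k y \<in> Domain R")
  case False
  have "(nsmul j y, 1 ^ j) \<in> R" if "nsmul j y \<in> Domain R" for j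
  proof -
    have "j = 0" using False that by (meson gr0I)
    then show ?thesis using partial_char_0[OF R] by simp
  qed
  then show ?thesis using that[of 1] by simp
next
  case True
  then obtain k where "0 < k \<and> nsmul k y \<in> Domain R"
    and least: "\<And>i. i < k \<Longrightarrow> \<not> (0 < i \<and> nsmul i y \<in> Domain R)"
    using exists_least_iff[of "\<lambda>k. 0 < k \<and> nsmul k y \<in> Domain R"] by blast
  then have k: "0 < k" "nsmul k y \<in> Domain R" by simp_all
  then obtain c where c: "(nsmul k y, c) \<in> R" by blast
  have c_unit: "cmod c = 1" using partial_char_norm[OF R c] .
  then have "c \<noteq> 0" by auto
  define u where "u = cis (Arg c / k)"
  have "u ^ k = cis (Arg c)" unfolding u_def Complex.DeMoivre using k(1) by simp
  also have "\<dots> = c" using \<open>c \<noteq> 0\<close> c_unit by (simp add: cis_Arg sgn_div_norm)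
  finally have uk: "u ^ k = c" .
  have "(nsmul j y, u ^ j) \<in> R" if j: "nsmul j y \<in> Domain R" for j
  proof -
    have "k dvd j"
      by (rule least_nsmul_mem_dvd[OF partial_char_Domain[OF R] k _ j]) (use least in blast)
    then obtain q where q: "j = k * q" by (elim dvdE)
    have "(nsmul q (nsmul k y), c ^ q) \<in> R" using partial_char_nsmul[OF R c] .
    moreover have "nsmul q (nsmul k y) = nsmul j y" unfolding q
      by (simp add: nsmul_mult[symmetric] mult.commute)
    moreover have "c ^ q = u ^ j" unfolding q by (simp add: power_mult uk)
    ultimately show ?thesis by simp
  qed
  then show ?thesis using that[of u] by (simp add: u_def)
qed

lemma partial_char_Union:
  assumes "C \<noteq> {}" and chain: "subset.chain {R. partial_char R} C"
  shows "partial_char (\<Union>C)"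
proof -
  have pc: "\<And>X. X \<in> C \<Longrightarrow> partial_char X"
    and comparable: "\<And>X Y. X \<in> C \<Longrightarrow> Y \<in> C \<Longrightarrow> X \<subseteq> Y \<or> Y \<subseteq> X"
    using chain by (auto simp: subset_chain_def)
  show ?thesis unfolding partial_char_def
  proof (intro conjI allI impI)
    show "(0, 1) \<in> \<Union>C" using assms(1) pc partial_char_0 by blast
  next
    fix a u b v assume "(a, u) \<in> \<Union>C" "(b, v) \<in> \<Union>C"
    then obtain X Y where "X \<in> C" "Y \<in> C" "(a, u) \<in> X" "(b, v) \<in> Y" by auto
    then show "(a - b, u * cnj v) \<in> \<Union>C" using comparable[of X Y] pc partial_char_diff by blast
  next
    fix a u v assume "(a, u) \<in> \<Union>C" "(a, v) \<in> \<Union>C"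
    then obtain X Y where "X \<in> C" "Y \<in> C" "(a, u) \<in> X" "(a, v) \<in> Y" by auto
    then show "u = v" using comparable[of X Y] pc partial_char_unique by blast
  next
    fix a u assume "(a, u) \<in> \<Union>C"
    then show "cmod u = 1" using pc partial_char_norm by blast
  qed
qed

lemma maximal_partial_char_total:
  assumes M: "partial_char M" and maximal: "\<And>R. partial_char R \<Longrightarrow> M \<subseteq> R \<Longrightarrow> R = M"
  shows "Domain M = UNIV"
proof (rule ccontr)
  assume "Domain M \<noteq> UNIV"
  then obtain x where x: "x \<notin> Domain M" by blast
  obtain u where u: "cmod u = 1" "\<And>j. nsmul j x \<in> Domain M \<Longrightarrow> (nsmul j x, u ^ j) \<in> M"
    using partial_char_consistent_value[OF M] by blast
  have "char_extension M x u = M"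
    using maximal partial_char_char_extension[OF M u] subset_char_extension by blast
  then show False using mem_char_extension[OF M, of x u] x by auto
qed

lemma character_of_total_partial_char:
  assumes M: "partial_char M" and total: "Domain M = UNIV"
  obtains ch where "character ch" "\<And>x u. (x, u) \<in> M \<Longrightarrow> ch x = u"
proof -
  define ch where "ch x = (THE u. (x, u) \<in> M)" for x
  have ch_eq: "ch x = u" if "(x, u) \<in> M" for x u
    unfolding ch_def using that partial_char_unique[OF M] by blast
  have ch_mem: "(x, ch x) \<in> M" for x
  proof -
    obtain u where "(x, u) \<in> M" using total by blast
    then show ?thesis using ch_eq by simp
  qed
  have "character ch" unfolding character_def
  proof (intro conjI allI)
    fix x y show "ch (x + y) = ch x * ch y"
      using ch_eq partial_char_add[OF M ch_mem ch_mem] by simp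
  next
    fix x show "cmod (ch x) = 1" using partial_char_norm[OF M ch_mem] .
  qed
  then show ?thesis using that ch_eq by blast
qed

text \<open>The circle group is divisible, so characters extend along subgroups: Zorn's lemma
  applied to partial characters.\<close>

theorem character_exists:
  fixes g :: "'g::ab_group_add"
  assumes w: "cmod w = 1" and order: "\<And>j. nsmul j g = 0 \<Longrightarrow> w ^ j = 1"
  obtains ch where "character ch" "ch g = w"
proof -
  have trivial: "partial_char {(0::'g, 1)}" by (simp add: partial_char_def)
  have "(nsmul j g, w ^ j) \<in> {(0, 1)}" if "nsmul j g \<in> Domain {(0::'g, 1)}" for j
    using that order by simp
  then have R0: "partial_char (char_extension {(0, 1)} g w)"
    by (rule partial_char_char_extension[OF trivial w])
  define A where "A = {R. partial_char R \<and> char_extension {(0, 1)} g w \<subseteq> R}"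
  have "\<exists>M\<in>A. \<forall>X\<in>A. M \<subseteq> X \<longrightarrow> X = M"
  proof (rule subset_Zorn_nonempty)
    show "A \<noteq> {}" using R0 unfolding A_def by blast
  next
    fix C assume C: "C \<noteq> {}" "subset.chain A C"
    then have "subset.chain {R. partial_char R} C" unfolding A_def subset_chain_def by blast
    then have "partial_char (\<Union>C)" using partial_char_Union C(1) by blast
    moreover have "char_extension {(0, 1)} g w \<subseteq> \<Union>C"
      using C unfolding A_def subset_chain_def by blast
    ultimately show "\<Union>C \<in> A" unfolding A_def by blast
  qed
  then obtain M where "M \<in> A" and maximal_in_A: "\<And>X. X \<in> A \<Longrightarrow> M \<subseteq> X \<Longrightarrow> X = M"
    by blast
  then have M: "partial_char M" "char_extension {(0, 1)} g w \<subseteq> M" unfolding A_def by simp_all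
  have maximal: "R = M" if "partial_char R" "M \<subseteq> R" for R
    using maximal_in_A[of R] that M(2) unfolding A_def by blast
  obtain ch where ch: "character ch" "\<And>x u. (x, u) \<in> M \<Longrightarrow> ch x = u"
    using character_of_total_partial_char[OF M(1) maximal_partial_char_total[OF M(1) maximal]]
    by blast
  have "(g, w) \<in> M" using M(2) mem_char_extension[OF trivial] by blast
  then show ?thesis using that ch by blast
qed

section \<open>Characters separate the group algebra\<close>

lemma character_separates_points:
  fixes d :: "'g::ab_group_add"
  assumes "d \<noteq> 0"
  obtains ch where "character ch" "ch d \<noteq> 1"
proof (cases "\<exists>k>0. nsmul k d = 0")
  case False
  have order: "(- 1) ^ j = (1::complex)" if "nsmul j d = 0" for j
  proof -
    have "j = 0" using False that by (meson gr0I)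
    then show ?thesis by simp
  qed
  obtain ch where "character ch" "ch d = - 1"
    by (rule character_exists[of "- 1" d, OF _ order]) auto
  then show ?thesis using that by simp
next
  case True
  then have "\<exists>k. 0 < k \<and> nsmul k d \<in> {0}" by simp
  then obtain k where "0 < k \<and> nsmul k d \<in> {0}"
    and least: "\<And>i. i < k \<Longrightarrow> \<not> (0 < i \<and> nsmul i d \<in> {0})"
    using exists_least_iff[of "\<lambda>k. 0 < k \<and> nsmul k d \<in> {0}"] by blast
  then have k: "0 < k" "nsmul k d \<in> {0}" by simp_all
  have "k \<noteq> 1" using k(2) assms by auto
  define w where "w = cis (2 * pi / k)"
  have order: "w ^ j = 1" if "nsmul j d = 0" for j
  proof -
    have "k dvd j" by (rule least_nsmul_mem_dvd[of "{0}" k d j]) (use k least that in auto)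
    then obtain q where "j = k * q" ..
    then have "w ^ j = cis (2 * pi * real q)"
      using k(1) by (simp add: w_def Complex.DeMoivre field_simps)
    then show ?thesis by simp
  qed
  obtain ch where ch: "character ch" "ch d = w"
    by (rule character_exists[of w d, OF _ order]) (auto simp: w_def)
  have "2 \<le> real k" using k(1) \<open>k \<noteq> 1\<close> by linarith
  then have "2 * pi / k \<le> pi" using pi_gt_zero by (simp add: field_simps mult_left_mono)
  then have "Arg w = 2 * pi / k"
    unfolding w_def using k(1) pi_gt_zero
    by (intro Arg_cis) (simp add: order.strict_trans[of "- pi" 0])
  then have "w \<noteq> 1" using k(1) by auto
  then show ?thesis using that ch by blast
qed

lemma vandermonde_coefficient_zero:
  fixes c :: "complex \<Rightarrow> complex"
  assumes "finite Z" "\<And>m. m < card Z \<Longrightarrow> (\<Sum>z\<in>Z. c z * z ^ m) = 0" "z \<in> Z"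
  shows "c z = 0"
  using assms
proof (induction Z arbitrary: c z rule: finite_induct)
  case (insert w Z)
  have S: "(\<Sum>z\<in>Z. c z * z ^ m) = - (c w * w ^ m)" if "m < card Z + 1" for m
    using insert.prems(1)[of m] insert.hyps that by (simp add: add_eq_0_iff)
  txt \<open>The coefficients c z * (z - w) satisfy the hypothesis on Z.\<close>
  have "(\<Sum>z\<in>Z. c z * (z - w) * z ^ m) = 0" if "m < card Z" for m
  proof -
    have "(\<Sum>z\<in>Z. c z * (z - w) * z ^ m) = (\<Sum>z\<in>Z. c z * z ^ Suc m) - w * (\<Sum>z\<in>Z. c z * z ^ m)"
      by (simp add: sum_distrib_left sum_subtractf algebra_simps)
    also have "\<dots> = 0" using S[of "Suc m"] S[of m] that by (simp add: algebra_simps)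
    finally show ?thesis .
  qed
  then have "c z * (z - w) = 0" if "z \<in> Z" for z
    using insert.IH[of "\<lambda>z. c z * (z - w)"] that by blast
  then have cZ: "c z = 0" if "z \<in> Z" for z
    using that insert.hyps(2) by fastforce
  moreover have "c w = 0" using S[of 0] cZ by simp
  ultimately show ?case using insert.prems(2) by auto
qed simp

definition pm_restrict :: "('g \<Rightarrow> bool) \<Rightarrow> ('g \<Rightarrow>\<^sub>0 complex) \<Rightarrow> ('g \<Rightarrow>\<^sub>0 complex)" where
  "pm_restrict P a = (\<Sum>k\<in>{k\<in>keys a. P k}. single k (lookup a k))"

lemma lookup_pm_restrict: "lookup (pm_restrict P a) x = (if P x then lookup a x else 0)"
  unfolding pm_restrict_def lookup_sum
  by (cases "x \<in> keys a") (auto simp: lookup_single when_def in_keys_iff)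

lemma keys_pm_restrict: "keys (pm_restrict P a) = {k\<in>keys a. P k}"
  by (auto simp: in_keys_iff lookup_pm_restrict split: if_splits)

lemma fourier_pm_restrict:
  "fourier ch (pm_restrict P a) = (\<Sum>k\<in>{k\<in>keys a. P k}. lookup a k * ch k)"
  by (simp add: pm_restrict_def fourier_sum)

lemma fourier_sum_fibres:
  "fourier ch a = (\<Sum>z\<in>f ` keys a. fourier ch (pm_restrict (\<lambda>k. f k = z) a))"
  by (simp only: fourier_pm_restrict fourier_def[of ch a]) (rule sum.group[symmetric]; auto)

text \<open>Twisting by powers of ps and a Vandermonde argument isolate the fibres of ps.\<close>

lemma fourier_fibre_zero:
  assumes ps: "character ps"
    and vanish: "\<And>m. m < card (keys a) \<Longrightarrow> fourier (\<lambda>x. ch x * ps x ^ (r + m)) a = 0"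
  shows "fourier ch (pm_restrict (\<lambda>k. ps k = z) a) = 0"
proof -
  define Z where "Z = ps ` keys a"
  define c where "c z = fourier ch (pm_restrict (\<lambda>k. ps k = z) a)" for z
  have twist: "fourier (\<lambda>x. ch x * ps x ^ n) (pm_restrict (\<lambda>k. ps k = z) a) = c z * z ^ n"
    for z n
    unfolding c_def fourier_pm_restrict sum_distrib_right by (rule sum.cong) (auto simp: mult_ac)
  have moments: "(\<Sum>z\<in>Z. (c z * z ^ r) * z ^ m) = 0" if "m < card Z" for m
  proof -
    have "card Z \<le> card (keys a)" unfolding Z_def by (rule card_image_le) simp
    then have "fourier (\<lambda>x. ch x * ps x ^ (r + m)) a = 0" using vanish that by simp
    moreover have "fourier (\<lambda>x. ch x * ps x ^ (r + m)) a
        = (\<Sum>z\<in>Z. fourier (\<lambda>x. ch x * ps x ^ (r + m)) (pm_restrict (\<lambda>k. ps k = z) a))"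
      unfolding Z_def by (rule fourier_sum_fibres)
    ultimately show ?thesis by (simp only: twist) (simp add: power_add mult.assoc)
  qed
  have "c z * z ^ r = 0" if "z \<in> Z" for z
    by (rule vandermonde_coefficient_zero[OF _ moments that]) (simp add: Z_def)
  moreover have "z \<noteq> 0" if "z \<in> Z" for z
    using that character_nonzero[OF ps] unfolding Z_def by auto
  moreover have "c z = 0" if "z \<notin> Z"
    using that unfolding c_def fourier_pm_restrict Z_def by (auto intro: sum.neutral)
  ultimately show ?thesis unfolding c_def by auto
qed

theorem fourier_injective:
  fixes a :: "'g::ab_group_add \<Rightarrow>\<^sub>0 complex"
  assumes "\<And>ch. character ch \<Longrightarrow> fourier ch a = 0"
  shows "a = 0"
  using assms
proof (induction "card (keys a)" arbitrary: a rule: less_induct)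
  case less
  show ?case
  proof (rule ccontr)
    assume "a \<noteq> 0"
    then obtain g where g: "g \<in> keys a" by fastforce
    show False
    proof (cases "keys a = {g}")
      case True
      have "fourier (\<lambda>_. 1) a = lookup a g" unfolding fourier_def True by simp
      then show False using less.prems[OF character_one] g by (simp add: in_keys_iff)
    next
      case False
      then obtain h where h: "h \<in> keys a" "h \<noteq> g" using g by blast
      obtain ps where ps: "character ps" "ps (g - h) \<noteq> 1"
        using character_separates_points[of "g - h"] h(2) by auto
      define b where "b = pm_restrict (\<lambda>k. ps k = ps g) a"
      have "fourier ch b = 0" if "character ch" for ch
        unfolding b_def
        by (rule fourier_fibre_zero[OF ps(1), where r = 0])
          (simp add: less.prems character_mult_power[OF that ps(1)])
      moreover have "card (keys b) < card (keys a)"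
      proof (rule psubset_card_mono)
        have "ps h \<noteq> ps g" using ps character_eq_iff[OF ps(1), of g h] by auto
        then show "keys b \<subset> keys a" using h(1) by (auto simp: b_def keys_pm_restrict)
      qed simp
      ultimately have "b = 0" using less.hyps by blast
      moreover have "lookup b g = lookup a g" by (simp add: b_def lookup_pm_restrict)
      ultimately show False using g by (simp add: in_keys_iff)
    qed
  qed
qed

lemma poly_mapping_eq_by_fourier:
  fixes a b :: "'g::ab_group_add \<Rightarrow>\<^sub>0 complex"
  shows "(\<And>ch. character ch \<Longrightarrow> fourier ch a = fourier ch b) \<Longrightarrow> a = b"
  using fourier_injective[of "a - b"] by (simp add: fourier_diff)

section \<open>C*-norms from families of characters\<close>

lemma cstar_norm_nonneg: "cstar_norm N \<Longrightarrow> 0 \<le> N a"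
  by (simp add: cstar_norm_def)

lemma cstar_norm_eq_0_iff: "cstar_norm N \<Longrightarrow> N a = 0 \<longleftrightarrow> a = 0"
  by (simp add: cstar_norm_def)

lemma cstar_norm_0: "cstar_norm N \<Longrightarrow> N 0 = 0"
  by (simp add: cstar_norm_def)

lemma cstar_norm_triangle: "cstar_norm N \<Longrightarrow> N (a + b) \<le> N a + N b"
  by (simp add: cstar_norm_def)

lemma cstar_norm_gscale: "cstar_norm N \<Longrightarrow> N (gscale c a) = cmod c * N a"
  by (simp add: cstar_norm_def)

lemma cstar_norm_mult: "cstar_norm N \<Longrightarrow> N (a * b) \<le> N a * N b"
  by (simp add: cstar_norm_def)

lemma cstar_norm_gstar_mult: "cstar_norm N \<Longrightarrow> N (gstar a * a) = (N a)\<^sup>2"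
  by (simp add: cstar_norm_def)

lemma cstar_norm_sum: "cstar_norm N \<Longrightarrow> N (sum f A) \<le> (\<Sum>x\<in>A. N (f x))"
proof (induct A rule: infinite_finite_induct)
  case (insert x F)
  then show ?case using cstar_norm_triangle[OF insert.prems, of "f x" "sum f F"] by simp
qed (simp_all add: cstar_norm_0)

definition sup_norm :: "('g \<Rightarrow> complex) set \<Rightarrow> ('g \<Rightarrow>\<^sub>0 complex) \<Rightarrow> real" where
  "sup_norm S a = (SUP ch\<in>S. cmod (fourier ch a))"

locale character_family =
  fixes S :: "('g::ab_group_add \<Rightarrow> complex) set"
  assumes nonempty: "S \<noteq> {}" and character: "\<And>ch. ch \<in> S \<Longrightarrow> character ch"
begin

lemma norm_fourier_le_sup_norm: "ch \<in> S \<Longrightarrow> cmod (fourier ch a) \<le> sup_norm S a"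
  unfolding sup_norm_def
  by (rule cSUP_upper) (auto intro!: bdd_aboveI2 norm_fourier_le character)

lemma sup_norm_le: "(\<And>ch. ch \<in> S \<Longrightarrow> cmod (fourier ch a) \<le> B) \<Longrightarrow> sup_norm S a \<le> B"
  unfolding sup_norm_def by (rule cSUP_least) (use nonempty in auto)

lemma sup_norm_nonneg: "0 \<le> sup_norm S a"
proof -
  obtain ch where "ch \<in> S" using nonempty by blast
  then show ?thesis using norm_fourier_le_sup_norm[of ch a] norm_ge_zero[of "fourier ch a"]
    by linarith
qed

lemma sup_norm_triangle: "sup_norm S (a + b) \<le> sup_norm S a + sup_norm S b"
proof (rule sup_norm_le)
  fix ch assume ch: "ch \<in> S"
  have "cmod (fourier ch (a + b)) \<le> cmod (fourier ch a) + cmod (fourier ch b)"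
    unfolding fourier_add by (rule norm_triangle_ineq)
  also have "\<dots> \<le> sup_norm S a + sup_norm S b"
    using norm_fourier_le_sup_norm[OF ch, of a] norm_fourier_le_sup_norm[OF ch, of b]
    by (rule add_mono)
  finally show "cmod (fourier ch (a + b)) \<le> sup_norm S a + sup_norm S b" .
qed

lemma sup_norm_gscale: "sup_norm S (gscale c a) = cmod c * sup_norm S a"
proof (cases "c = 0")
  case True
  then have "sup_norm S (gscale c a) \<le> 0" by (intro sup_norm_le) (simp add: fourier_gscale)
  then show ?thesis using True sup_norm_nonneg[of "gscale c a"] by simp
next
  case False
  then have c: "0 < cmod c" by simp
  show ?thesis
  proof (rule antisym)
    show "sup_norm S (gscale c a) \<le> cmod c * sup_norm S a"
      by (rule sup_norm_le)
        (simp add: fourier_gscale norm_mult mult_left_mono norm_fourier_le_sup_norm)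
    have "sup_norm S a \<le> sup_norm S (gscale c a) / cmod c"
    proof (rule sup_norm_le)
      fix ch assume "ch \<in> S"
      then have "cmod c * cmod (fourier ch a) \<le> sup_norm S (gscale c a)"
        using norm_fourier_le_sup_norm[of ch "gscale c a"] by (simp add: fourier_gscale norm_mult)
      then show "cmod (fourier ch a) \<le> sup_norm S (gscale c a) / cmod c"
        using c by (simp add: field_simps mult.commute)
    qed
    then show "cmod c * sup_norm S a \<le> sup_norm S (gscale c a)"
      using c by (simp add: field_simps mult.commute)
  qed
qed

lemma sup_norm_mult: "sup_norm S (a * b) \<le> sup_norm S a * sup_norm S b"
proof (rule sup_norm_le)
  fix ch assume ch: "ch \<in> S"
  show "cmod (fourier ch (a * b)) \<le> sup_norm S a * sup_norm S b"
    unfolding fourier_mult[OF character[OF ch]] norm_mult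
    by (rule mult_mono) (simp_all add: norm_fourier_le_sup_norm[OF ch] sup_norm_nonneg)
qed

lemma sup_norm_gstar_mult: "sup_norm S (gstar a * a) = (sup_norm S a)\<^sup>2"
proof -
  have fourier_gstar_mult: "cmod (fourier ch (gstar a * a)) = (cmod (fourier ch a))\<^sup>2"
    if "ch \<in> S" for ch
    using character[OF that] by (simp add: fourier_mult fourier_gstar norm_mult power2_eq_square)
  show ?thesis
  proof (rule antisym)
    show "sup_norm S (gstar a * a) \<le> (sup_norm S a)\<^sup>2"
      by (rule sup_norm_le) (simp add: fourier_gstar_mult power_mono norm_fourier_le_sup_norm)
    have "sup_norm S a \<le> sqrt (sup_norm S (gstar a * a))"
      by (rule sup_norm_le, rule real_le_rsqrt)
        (simp add: fourier_gstar_mult[symmetric] norm_fourier_le_sup_norm)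
    then show "(sup_norm S a)\<^sup>2 \<le> sup_norm S (gstar a * a)"
      using sup_norm_nonneg by (metis power_mono real_sqrt_pow2)
  qed
qed

lemma cstar_norm_sup_norm:
  assumes separating: "\<And>a. (\<And>ch. ch \<in> S \<Longrightarrow> fourier ch a = 0) \<Longrightarrow> a = 0"
  shows "cstar_norm (sup_norm S)"
proof -
  have "sup_norm S a = 0 \<longleftrightarrow> a = 0" for a
  proof
    assume "sup_norm S a = 0"
    then show "a = 0" using separating norm_fourier_le_sup_norm[of _ a] by (metis norm_le_zero_iff)
  next
    assume "a = 0"
    then have "sup_norm S a \<le> 0" by (intro sup_norm_le) simp
    then show "sup_norm S a = 0" using sup_norm_nonneg[of a] by linarith
  qed
  then show ?thesis unfolding cstar_norm_def
    using sup_norm_nonneg sup_norm_triangle sup_norm_gscale sup_norm_mult sup_norm_gstar_mult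
    by blast
qed

end

interpretation all_characters: character_family "{ch. character ch}"
  by unfold_locales (auto intro: character_one)

lemma cstar_norm_sup_norm_all_characters:
  "cstar_norm (sup_norm {ch :: 'g::ab_group_add \<Rightarrow> complex. character ch})"
  by (rule all_characters.cstar_norm_sup_norm) (rule fourier_injective, simp)

section \<open>Uniqueness of the C*-norm for torsion groups\<close>

definition spectrum :: "('g::ab_group_add \<Rightarrow>\<^sub>0 complex) \<Rightarrow> complex set" where
  "spectrum a = {fourier ch a | ch. character ch}"

text \<open>On a torsion group, the values of characters at a point x are roots of unity of
  the order of x.\<close>

lemma finite_spectrum:
  fixes a :: "'g::ab_group_add \<Rightarrow>\<^sub>0 complex"
  assumes "torsion_group TYPE('g)"
  shows "finite (spectrum a)"
proof -
  obtain ord :: "'g \<Rightarrow> nat" where ord: "\<And>x. 0 < ord x" "\<And>x. nsmul (ord x) x = 0"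
    using assms unfolding torsion_group_def by metis
  define roots where "roots = PiE (keys a) (\<lambda>g. {z::complex. z ^ ord g = 1})"
  have "spectrum a \<subseteq> (\<lambda>f. \<Sum>g\<in>keys a. lookup a g * f g) ` roots"
  proof
    fix z assume "z \<in> spectrum a"
    then obtain ch where ch: "character ch" "z = fourier ch a" unfolding spectrum_def by blast
    have "ch g ^ ord g = 1" for g
      using character_nsmul[OF ch(1), of "ord g" g] ord(2) character_0[OF ch(1)] by simp
    then have "restrict ch (keys a) \<in> roots" unfolding roots_def by auto
    moreover have "z = (\<Sum>g\<in>keys a. lookup a g * restrict ch (keys a) g)"
      unfolding ch(2) fourier_def by simp
    ultimately show "z \<in> (\<lambda>f. \<Sum>g\<in>keys a. lookup a g * f g) ` roots" by blast
  qed
  moreover have "finite roots"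
    unfolding roots_def using ord(1) by (intro finite_PiE) (auto intro: finite_roots_unity)
  ultimately show ?thesis by (rule finite_subset[OF _ finite_imageI])
qed

text \<open>The Lagrange interpolation polynomial in a for the node l over the spectrum of a;
  its Fourier transform is the indicator function of fourier ch a = l.\<close>

definition spectral_proj :: "('g::ab_group_add \<Rightarrow>\<^sub>0 complex) \<Rightarrow> complex \<Rightarrow> ('g \<Rightarrow>\<^sub>0 complex)"
  where "spectral_proj a l = (\<Prod>\<mu>\<in>spectrum a - {l}. gscale (1 / (l - \<mu>)) (a - single 0 \<mu>))"

lemma fourier_spectral_proj:
  assumes fin: "finite (spectrum a)" and ch: "character ch"
  shows "fourier ch (spectral_proj a l) = (if fourier ch a = l then 1 else 0)"
proof -
  have "fourier ch (spectral_proj a l) = (\<Prod>\<mu>\<in>spectrum a - {l}. (fourier ch a - \<mu>) / (l - \<mu>))"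
    using ch by (simp add: spectral_proj_def fourier_prod fourier_gscale fourier_diff character_0)
  moreover have "fourier ch a \<in> spectrum a" using ch unfolding spectrum_def by blast
  ultimately show ?thesis using fin by (auto simp: prod_zero_iff intro!: prod.neutral)
qed

lemma power_eq_sum_spectral_proj:
  fixes a :: "'g::ab_group_add \<Rightarrow>\<^sub>0 complex"
  assumes fin: "finite (spectrum a)"
  shows "a ^ n = (\<Sum>l\<in>spectrum a. gscale (l ^ n) (spectral_proj a l))"
proof (rule poly_mapping_eq_by_fourier)
  fix ch :: "'g \<Rightarrow> complex" assume ch: "character ch"
  have "fourier ch a \<in> spectrum a" using ch unfolding spectrum_def by blast
  then show "fourier ch (a ^ n) = fourier ch (\<Sum>l\<in>spectrum a. gscale (l ^ n) (spectral_proj a l))"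
    using fin by (simp add: fourier_power[OF ch] fourier_sum fourier_gscale
      fourier_spectral_proj[OF fin ch] if_distrib sum.delta cong: if_cong)
qed

lemma norm_fourier_le_cstar_norm:
  assumes fin: "finite (spectrum a)" and N: "cstar_norm N" and ch: "character ch"
  shows "cmod (fourier ch a) \<le> N a"
proof -
  define e where "e = spectral_proj a (fourier ch a)"
  have "a * e = gscale (fourier ch a) e"
    by (rule poly_mapping_eq_by_fourier)
      (simp add: e_def fourier_mult fourier_gscale fourier_spectral_proj[OF fin])
  then have "cmod (fourier ch a) * N e \<le> N a * N e"
    using cstar_norm_mult[OF N, of a e] cstar_norm_gscale[OF N] by simp
  moreover have "e \<noteq> 0"
    using fourier_spectral_proj[OF fin ch, of "fourier ch a"] by (auto simp: e_def)
  then have "0 < N e" using cstar_norm_nonneg[OF N, of e] cstar_norm_eq_0_iff[OF N, of e] by simp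
  ultimately show ?thesis by simp
qed

lemma gstar_power:
  fixes b :: "'g::ab_group_add \<Rightarrow>\<^sub>0 complex"
  shows "gstar (b ^ n) = gstar b ^ n"
  by (rule poly_mapping_eq_by_fourier) (simp add: fourier_gstar fourier_power)

lemma cstar_norm_power2_selfadjoint:
  assumes N: "cstar_norm N" and selfadjoint: "gstar b = b"
  shows "N (b ^ 2 ^ k) = N b ^ 2 ^ k"
proof (induct k)
  case (Suc k)
  have "b ^ 2 ^ Suc k = gstar (b ^ 2 ^ k) * b ^ 2 ^ k"
    by (simp add: gstar_power selfadjoint power_add[symmetric] mult_2)
  then have "N (b ^ 2 ^ Suc k) = (N (b ^ 2 ^ k))\<^sup>2" using cstar_norm_gstar_mult[OF N] by simp
  then show ?case using Suc by (simp add: power_mult[symmetric] mult.commute)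
qed simp

lemma le_if_powers_bounded:
  fixes x r K :: real
  assumes "0 \<le> r" and bound: "\<And>k. x ^ 2 ^ k \<le> K * r ^ 2 ^ k"
  shows "x \<le> r"
proof (rule ccontr)
  assume "\<not> x \<le> r"
  then have "r < x" by simp
  show False
  proof (cases "r = 0")
    case True
    then show False using bound[of 0] \<open>r < x\<close> by simp
  next
    case False
    then have r: "0 < r" using assms(1) by simp
    have t: "1 < x / r" using \<open>r < x\<close> r by simp
    obtain k where k: "K < (x / r) ^ k" using real_arch_pow[OF t] by blast
    have "(x / r) ^ k \<le> (x / r) ^ 2 ^ k" using less_exp[of k] t by (intro power_increasing) auto
    then have "K * r ^ 2 ^ k < (x / r) ^ 2 ^ k * r ^ 2 ^ k" using k r
      by (intro mult_strict_right_mono) auto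
    also have "\<dots> = x ^ 2 ^ k" using r by (simp add: power_divide)
    finally show False using bound[of k] by simp
  qed
qed

text \<open>Gelfand's spectral radius argument: for b = a* a the C*-identity gives
  N (b ^ 2 ^ k) = N b ^ 2 ^ k, while the spectral decomposition of b ^ n bounds N (b ^ n)
  by a constant times the n-th power of the largest character value of b.\<close>

lemma cstar_norm_le_sup_norm:
  fixes a :: "'g::ab_group_add \<Rightarrow>\<^sub>0 complex"
  assumes torsion: "torsion_group TYPE('g)" and N: "cstar_norm N"
  shows "N a \<le> sup_norm {ch. character ch} a"
proof -
  define b where "b = gstar a * a"
  define \<rho> where "\<rho> = sup_norm {ch. character ch} b"
  have fin: "finite (spectrum b)" by (rule finite_spectrum[OF torsion])
  have selfadjoint: "gstar b = b"
    by (rule poly_mapping_eq_by_fourier)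
      (simp add: b_def fourier_gstar fourier_mult mult.commute)
  define K where "K = (\<Sum>l\<in>spectrum b. N (spectral_proj b l))"
  have "N (b ^ n) \<le> K * \<rho> ^ n" for n
  proof -
    have "N (b ^ n) \<le> (\<Sum>l\<in>spectrum b. N (gscale (l ^ n) (spectral_proj b l)))"
      unfolding power_eq_sum_spectral_proj[OF fin] by (rule cstar_norm_sum[OF N])
    also have "\<dots> = (\<Sum>l\<in>spectrum b. cmod l ^ n * N (spectral_proj b l))"
      by (simp add: cstar_norm_gscale[OF N] norm_power)
    also have "\<dots> \<le> (\<Sum>l\<in>spectrum b. \<rho> ^ n * N (spectral_proj b l))"
      by (intro sum_mono mult_right_mono power_mono cstar_norm_nonneg[OF N])
        (auto simp: spectrum_def \<rho>_def all_characters.norm_fourier_le_sup_norm)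
    finally show ?thesis by (simp add: K_def sum_distrib_left mult.commute)
  qed
  then have "N b \<le> \<rho>"
    using le_if_powers_bounded[OF all_characters.sup_norm_nonneg]
      cstar_norm_power2_selfadjoint[OF N selfadjoint]
    unfolding \<rho>_def by metis
  then have "(N a)\<^sup>2 \<le> (sup_norm {ch. character ch} a)\<^sup>2"
    using cstar_norm_gstar_mult[OF N, of a] all_characters.sup_norm_gstar_mult[of a]
    by (simp add: b_def \<rho>_def)
  then show ?thesis using all_characters.sup_norm_nonneg by (rule power2_le_imp_le)
qed

theorem torsion_group_unique_cstar_norm:
  assumes "torsion_group TYPE('g::ab_group_add)" and N: "cstar_norm N"
  shows "N = sup_norm {ch :: 'g \<Rightarrow> complex. character ch}"
proof
  fix a :: "'g \<Rightarrow>\<^sub>0 complex"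
  show "N a = sup_norm {ch. character ch} a"
  proof (rule antisym)
    show "N a \<le> sup_norm {ch. character ch} a" by (rule cstar_norm_le_sup_norm[OF assms])
    show "sup_norm {ch. character ch} a \<le> N a"
      using norm_fourier_le_cstar_norm[OF finite_spectrum[OF assms(1)] N]
      by (intro all_characters.sup_norm_le) simp
  qed
qed

section \<open>Non-uniqueness for groups with an element of infinite order\<close>

lemma exists_shift_cos_nonneg:
  fixes \<alpha> \<beta> :: real
  assumes \<alpha>: "0 < \<alpha>" "real n * \<alpha> \<le> pi / 2" and \<beta>: "\<beta> \<le> pi"
  obtains s :: nat where "\<And>m. m < n \<Longrightarrow> 0 \<le> cos (\<beta> + real (s + m) * \<alpha>)"
proof
  define r where "r = (3 * pi / 2 - \<beta>) / \<alpha>"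
  define s where "s = nat \<lceil>r\<rceil>"
  have "0 \<le> r" using \<alpha> \<beta> pi_gt_zero unfolding r_def by (intro divide_nonneg_pos) linarith+
  then have r: "r \<le> real s" "real s \<le> r + 1" unfolding s_def by linarith+
  have r\<alpha>: "r * \<alpha> = 3 * pi / 2 - \<beta>" unfolding r_def using \<alpha> by simp
  have s\<alpha>: "r * \<alpha> \<le> real s * \<alpha>" "real s * \<alpha> \<le> r * \<alpha> + \<alpha>"
    using mult_right_mono[OF r(1), of \<alpha>] mult_right_mono[OF r(2), of \<alpha>] \<alpha>(1)
    by (simp_all add: distrib_right)
  fix m assume "m < n"
  then have "real (Suc m) * \<alpha> \<le> real n * \<alpha>" using \<alpha>(1) by (intro mult_right_mono) simp_all
  then have "real (Suc m) * \<alpha> \<le> pi / 2" using \<alpha>(2) by linarith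
  then have m: "real m * \<alpha> + \<alpha> \<le> pi / 2" by (simp add: distrib_right)
  have "0 \<le> real m * \<alpha>" using \<alpha>(1) by simp
  define t where "t = \<beta> + real (s + m) * \<alpha> - 2 * pi"
  have "t = \<beta> + real s * \<alpha> + real m * \<alpha> - 2 * pi" unfolding t_def by (simp add: distrib_right)
  then have "- (pi / 2) \<le> t" "t \<le> pi / 2"
    using r\<alpha> s\<alpha> m \<open>0 \<le> real m * \<alpha>\<close> pi_gt_zero by linarith+
  then have "0 \<le> cos t" by (rule cos_ge_zero)
  then show "0 \<le> cos (\<beta> + real (s + m) * \<alpha>)"
    using cos_periodic[of t] unfolding t_def by simp
qed

text \<open>Multiplying by powers of a character ps with ps x = cis (pi / (2 (n + 1))), n the size
  of the support, turns ch x in steps so small that n consecutive ones stay in the right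
  half plane, and n twists suffice for the Vandermonde argument.\<close>

lemma fourier_injective_right_half:
  fixes x :: "'g::ab_group_add" and a :: "'g \<Rightarrow>\<^sub>0 complex"
  assumes infinite_order: "\<And>n. 0 < n \<Longrightarrow> nsmul n x \<noteq> 0"
    and vanish: "\<And>ch. character ch \<Longrightarrow> 0 \<le> Re (ch x) \<Longrightarrow> fourier ch a = 0"
  shows "a = 0"
proof (rule fourier_injective)
  define n where "n = card (keys a)"
  define \<alpha> where "\<alpha> = pi / (2 * Suc n)"
  have \<alpha>: "0 < \<alpha>" "real n * \<alpha> \<le> pi / 2" unfolding \<alpha>_def by (simp_all add: field_simps)
  have "cis \<alpha> ^ j = 1" if "nsmul j x = 0" for j
    using infinite_order[of j] that by (cases "j = 0") auto
  then obtain ps where ps: "character ps" "ps x = cis \<alpha>"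
    by (rule character_exists[of "cis \<alpha>" x, rotated]) auto
  fix ch :: "'g \<Rightarrow> complex" assume ch: "character ch"
  define \<beta> where "\<beta> = Arg (ch x)"
  have ch_x: "ch x = cis \<beta>"
    using character_norm[OF ch] character_nonzero[OF ch] unfolding \<beta>_def
      by (simp add: cis_Arg sgn_div_norm)
  obtain s where s: "\<And>m. m < n \<Longrightarrow> 0 \<le> cos (\<beta> + real (s + m) * \<alpha>)"
    using exists_shift_cos_nonneg[OF \<alpha>, of \<beta>] Arg_bounded unfolding \<beta>_def by blast
  have "fourier ch (pm_restrict (\<lambda>k. ps k = z) a) = 0" for z
  proof (rule fourier_fibre_zero[OF ps(1), where r = s])
    fix m assume "m < card (keys a)"
    moreover have "ch x * ps x ^ (s + m) = cis (\<beta> + real (s + m) * \<alpha>)"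
      unfolding ch_x ps(2) Complex.DeMoivre cis_mult by (simp add: mult.commute)
    ultimately show "fourier (\<lambda>x. ch x * ps x ^ (s + m)) a = 0"
      using s[of m] by (intro vanish character_mult_power[OF ch ps(1)]) (simp add: n_def)
  qed
  then show "fourier ch a = 0" by (simp add: fourier_sum_fibres[of ch a ps])
qed

lemma cstar_norm_right_half:
  fixes x :: "'g::ab_group_add"
  assumes infinite_order: "\<And>n. 0 < n \<Longrightarrow> nsmul n x \<noteq> 0"
  shows "cstar_norm (sup_norm {ch. character ch \<and> 0 \<le> Re (ch x)})"
proof -
  interpret right_half: character_family "{ch. character ch \<and> 0 \<le> Re (ch x)}"
    by unfold_locales (auto intro!: exI[of _ "\<lambda>_. 1"] character_one)
  show ?thesis
  proof (rule right_half.cstar_norm_sup_norm)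
    fix a :: "'g \<Rightarrow>\<^sub>0 complex"
    assume vanish: "\<And>ch. ch \<in> {ch. character ch \<and> 0 \<le> Re (ch x)} \<Longrightarrow> fourier ch a = 0"
    have "fourier ch a = 0" if "character ch" "0 \<le> Re (ch x)" for ch
      using vanish that by simp
    then show "a = 0" using fourier_injective_right_half[OF infinite_order] by blast
  qed
qed

text \<open>The two norms differ at 1 - x: some character sends x to -1, while
  cmod (1 - z) \<le> sqrt 2 whenever z is a unit with Re z \<ge> 0.\<close>

lemma sup_norm_right_half_neq:
  fixes x :: "'g::ab_group_add"
  assumes infinite_order: "\<And>n. 0 < n \<Longrightarrow> nsmul n x \<noteq> 0"
  shows "sup_norm {ch. character ch \<and> 0 \<le> Re (ch x)} \<noteq> sup_norm {ch. character ch}"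
proof
  assume eq: "sup_norm {ch. character ch \<and> 0 \<le> Re (ch x)} = sup_norm {ch. character ch}"
  interpret right_half: character_family "{ch. character ch \<and> 0 \<le> Re (ch x)}"
    by unfold_locales (auto intro!: exI[of _ "\<lambda>_. 1"] character_one)
  define d :: "'g \<Rightarrow>\<^sub>0 complex" where "d = single 0 1 - single x 1"
  have fourier_d: "fourier ch d = 1 - ch x" if "character ch" for ch
    using that by (simp add: d_def fourier_diff fourier_1)
  have "(- 1) ^ j = (1::complex)" if "nsmul j x = 0" for j
    using infinite_order[of j] that by (cases "j = 0") auto
  then obtain ch where ch: "character ch" "ch x = - 1"
    by (rule character_exists[of "- 1" x, rotated]) auto
  then have "2 \<le> sup_norm {ch. character ch} d"
    using all_characters.norm_fourier_le_sup_norm[of ch d] fourier_d by simp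
  moreover have "sup_norm {ch. character ch \<and> 0 \<le> Re (ch x)} d \<le> sqrt 2"
  proof (rule right_half.sup_norm_le)
    fix ch assume "ch \<in> {ch. character ch \<and> 0 \<le> Re (ch x)}"
    then have ch: "character ch" "0 \<le> Re (ch x)" by simp_all
    have "(cmod (1 - ch x))\<^sup>2 = 2 - 2 * Re (ch x)"
      using cmod_power2[of "ch x"] cmod_power2[of "1 - ch x"] character_norm[OF ch(1), of x]
      by (simp add: power2_eq_square algebra_simps)
    then show "cmod (fourier ch d) \<le> sqrt 2"
      using ch by (simp add: fourier_d real_le_rsqrt)
  qed
  moreover have "sqrt 2 < (2::real)" by (rule real_less_lsqrt) auto
  ultimately show False using eq by simp
qed

section \<open>Locally finite and torsion abelian groups\<close>

lemma gen_subgroup_subset: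
  assumes "S \<subseteq> H" "0 \<in> H" "\<forall>a\<in>H. \<forall>b\<in>H. a - b \<in> H"
  shows "gen_subgroup S \<subseteq> H"
  using assms unfolding gen_subgroup_def by blast

lemma gen_subgroup_closed:
  fixes S :: "'g::ab_group_add set"
  shows "S \<subseteq> gen_subgroup S" "0 \<in> gen_subgroup S"
    "\<forall>a\<in>gen_subgroup S. \<forall>b\<in>gen_subgroup S. a - b \<in> gen_subgroup S"
  unfolding gen_subgroup_def by auto

lemma torsion_if_finite_gen_subgroup:
  fixes x :: "'g::ab_group_add"
  assumes "finite (gen_subgroup {x})"
  shows "\<exists>n>0. nsmul n x = 0"
proof -
  have "range (\<lambda>n. nsmul n x) \<subseteq> gen_subgroup {x}"
    using nsmul_mem_subgroup[OF gen_subgroup_closed(2,3)] gen_subgroup_closed(1) by blast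
  then have "\<not> inj (\<lambda>n. nsmul n x)"
    using assms finite_subset range_inj_infinite by blast
  then obtain i j where ij: "i < j" "nsmul i x = nsmul j x"
    unfolding inj_def by (metis linorder_neqE_nat)
  then have "nsmul (j - i) x + nsmul i x = nsmul i x" using nsmul_add[of "j - i" i x] by simp
  then show ?thesis using ij(1) by (intro exI[of _ "j - i"]) simp
qed

text \<open>A finitely generated torsion group is the image of the finite set of coefficient
  vectors bounded by the orders of the generators.\<close>

lemma finite_gen_subgroup_if_torsion:
  fixes S :: "'g::ab_group_add set"
  assumes "torsion_group TYPE('g)" and S: "finite S"
  shows "finite (gen_subgroup S)"
proof -
  obtain ord :: "'g \<Rightarrow> nat" where ord: "\<And>x. 0 < ord x" "\<And>x. nsmul (ord x) x = 0"
    using assms(1) unfolding torsion_group_def by metis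
  define combination where "combination f = (\<Sum>s\<in>S. nsmul (f s) s)" for f
  have "gen_subgroup S \<subseteq> range combination"
  proof (rule gen_subgroup_subset)
    have "combination (\<lambda>t. if t = s then 1 else 0) = s" if "s \<in> S" for s
    proof -
      have "combination (\<lambda>t. if t = s then 1 else 0) = (\<Sum>t\<in>S. if t = s then t else 0)"
        unfolding combination_def by (rule sum.cong) auto
      then show ?thesis using S that by simp
    qed
    then show "S \<subseteq> range combination" by (metis image_eqI subsetI UNIV_I)
    show "0 \<in> range combination" by (rule range_eqI[of _ _ "\<lambda>_. 0"]) (simp add: combination_def)
    have "nsmul (f s + g s * (ord s - 1)) s = nsmul (f s) s - nsmul (g s) s" for f g s
      by (simp only: nsmul_add uminus_nsmul_order[OF ord, symmetric]) simp
    then have "combination f - combination g = combination (\<lambda>s. f s + g s * (ord s - 1))" for f g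
      by (simp add: combination_def sum_subtractf)
    then show "\<forall>a\<in>range combination. \<forall>b\<in>range combination. a - b \<in> range combination"
      by auto
  qed
  also have "range combination = combination ` PiE S (\<lambda>s. {..<ord s})"
  proof (intro antisym subsetI)
    fix y assume "y \<in> range combination"
    then obtain f where f: "y = combination f" by blast
    have "y = combination (restrict (\<lambda>s. f s mod ord s) S)"
      unfolding f combination_def by (intro sum.cong refl) (simp flip: nsmul_mod_order[OF ord(2)])
    moreover have "restrict (\<lambda>s. f s mod ord s) S \<in> PiE S (\<lambda>s. {..<ord s})" using ord(1) by auto
    ultimately show "y \<in> combination ` PiE S (\<lambda>s. {..<ord s})" by blast
  qed auto
  finally show ?thesis
    by (rule finite_subset) (use S in \<open>intro finite_imageI finite_PiE, auto\<close>)
qed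

lemma locally_finite_iff_torsion_group:
  "locally_finite TYPE('g::ab_group_add) \<longleftrightarrow> torsion_group TYPE('g)"
  unfolding locally_finite_def
  using torsion_if_finite_gen_subgroup finite_gen_subgroup_if_torsion
  by (metis finite.emptyI finite_insert torsion_group_def)

theorem corollary4:
  assumes "countable (UNIV :: 'g::ab_group_add set)"
  shows "(alg_cstar_unique TYPE('g) \<longleftrightarrow> locally_finite TYPE('g))
       \<and> (alg_cstar_unique TYPE('g) \<longleftrightarrow> torsion_group TYPE('g))"
proof -
  have "alg_cstar_unique TYPE('g) \<longleftrightarrow> torsion_group TYPE('g)"
  proof
    assume unique: "alg_cstar_unique TYPE('g)"
    show "torsion_group TYPE('g)" unfolding torsion_group_def
    proof (rule ccontr)
      assume "\<not> (\<forall>x::'g. \<exists>n>0. nsmul n x = 0)"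
      then obtain x :: 'g where infinite_order: "\<And>n. 0 < n \<Longrightarrow> nsmul n x \<noteq> 0" by blast
      show False
        using unique cstar_norm_right_half[OF infinite_order]
          sup_norm_right_half_neq[OF infinite_order]
          cstar_norm_sup_norm_all_characters
        unfolding alg_cstar_unique_def by blast
    qed
  next
    assume "torsion_group TYPE('g)"
    then show "alg_cstar_unique TYPE('g)"
      unfolding alg_cstar_unique_def
      using cstar_norm_sup_norm_all_characters torsion_group_unique_cstar_norm by blast
  qed
  then show ?thesis using locally_finite_iff_torsion_group by blast
qed

end
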